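(* Fix $\theta$. Suppose the predictions are stable in the sense that $\sqrt{K\,\mathrm{Var}(\nabla\ell_\theta(X,f^{(1)}(X))-\nabla\ell_\theta(X,\bar f(X))\mid f^{(1)})}\xrightarrow{L^1}0$ entrywise as $n\to\infty$. For $j\in[K]$ define $$L_j=\frac{1}{\sqrt n}\sum_{i\in I_j}\Big(\nabla\ell_\theta(X_i,f^{(j)}(X_i))-\mathbb{E}_X[\nabla\ell_\theta(X,f^{(j)}(X))]-\big(\nabla\ell_\theta(X_i,\bar f(X_i))-\mathbb{E}[\nabla\ell_\theta(X,\bar f(X))]\big)\Big).$$ Then $\sum_{j=1}^K L_j\xrightarrow{p}0$.
   Context: Setting: $(X_i,Y_i)_{i\le n}$ i.i.d. from $\mathbb{P}$; $X$ is an independent generic feature draw. $\ell_\theta(x,y)$ is a loss differentiable in $\theta\in\mathbb{R}^d$, $\nabla$ is the gradient in $\theta$. Folds $I_1,\dots,I_K$ are consecutive blocks of size $n/K$ of $\{1,\dots,n\}$; $f^{(j)}$ is trained by a possibly randomized algorithm on $\{(X_i,Y_i)\}_{i\notin I_j}$; $\bar f(x)=\mathbb{E}[f^{(1)}(x)]$. $\mathbb{E}_X$ denotes expectation over the independent $X$ conditionally on everything else; $\mathrm{Var}(\cdot\mid f^{(1)})$ is the conditional covariance matrix. Second moments are finite. *)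

theory Defs
  imports "HOL-Probability.Probability"
begin

definition grad :: "('d::real_inner \<Rightarrow> 'x \<Rightarrow> 'y \<Rightarrow> real) \<Rightarrow> 'd \<Rightarrow> 'x \<Rightarrow> 'y \<Rightarrow> 'd" where
  "grad l t0 x y = (THE D. GDERIV (\<lambda>t. l t x y) t0 :> D)"

text \<open>Folds (0-indexed, j < K): consecutive blocks of size b = n div K.\<close>
definition fold_block :: "nat \<Rightarrow> nat \<Rightarrow> nat set" where
  "fold_block b j = {j * b ..< (j + 1) * b}"

text \<open>k-th index (in increasing order) of the complement of fold j in {..<n}.\<close>
definition train_idx :: "nat \<Rightarrow> nat \<Rightarrow> nat \<Rightarrow> nat" where
  "train_idx b j k = (if k < j * b then k else k + b)"

definition train_data :: "nat \<Rightarrow> nat \<Rightarrow> nat \<Rightarrow> (nat \<Rightarrow> 'w \<Rightarrow> 'z) \<Rightarrow> 'w \<Rightarrow> nat \<Rightarrow> 'z" where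
  "train_data n b j Z w = (\<lambda>k\<in>{..< n - b}. Z (train_idx b j k) w)"

text \<open>The model f^(j): algorithm A run on the training data of fold j with its own
  internal randomness xi j.\<close>
definition fitted :: "((nat \<Rightarrow> 'z) \<Rightarrow> 'r \<Rightarrow> 'x \<Rightarrow> 'y) \<Rightarrow> nat \<Rightarrow> nat \<Rightarrow> (nat \<Rightarrow> 'w \<Rightarrow> 'z)
    \<Rightarrow> (nat \<Rightarrow> 'w \<Rightarrow> 'r) \<Rightarrow> nat \<Rightarrow> 'w \<Rightarrow> 'x \<Rightarrow> 'y" where
  "fitted A n b Z xi j w = A (train_data n b j Z w) (xi j w)"

definition fbar :: "'w measure \<Rightarrow> ('w \<Rightarrow> 'x \<Rightarrow> 'y::{banach,second_countable_topology}) \<Rightarrow> 'x \<Rightarrow> 'y" where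
  "fbar M f x = (\<integral>w. f w x \<partial>M)"

text \<open>Conditional variance of coordinate e (e a basis vector) of
  G(X, f(X)) - G(X, fb(X)) given the (fixed) model f, X distributed as PX.\<close>
definition cond_var_coord :: "'x measure \<Rightarrow> ('x \<Rightarrow> 'y \<Rightarrow> 'd::euclidean_space) \<Rightarrow> ('x \<Rightarrow> 'y)
    \<Rightarrow> ('x \<Rightarrow> 'y) \<Rightarrow> 'd \<Rightarrow> real" where
  "cond_var_coord PX G f fb e =
     (\<integral>x. ((G x (f x) - G x (fb x)) \<bullet> e)\<^sup>2 \<partial>PX) - (\<integral>x. (G x (f x) - G x (fb x)) \<bullet> e \<partial>PX)\<^sup>2"

definition L_fold :: "nat \<Rightarrow> nat set \<Rightarrow> 'x measure \<Rightarrow> ('x \<Rightarrow> 'y \<Rightarrow> 'd::euclidean_space)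
    \<Rightarrow> ('x \<Rightarrow> 'y) \<Rightarrow> ('x \<Rightarrow> 'y) \<Rightarrow> (nat \<Rightarrow> 'x) \<Rightarrow> 'd" where
  "L_fold n I PX G f fb Xs =
     (1 / sqrt (real n)) *\<^sub>R (\<Sum>i\<in>I. (G (Xs i) (f (Xs i)) - (\<integral>x. G x (f x) \<partial>PX))
                                  - (G (Xs i) (fb (Xs i)) - (\<integral>x. G x (fb x) \<partial>PX)))"

end

theory Submission
  imports Defs
begin

text \<open>
  Conditionally on the training input of fold \<open>j\<close> (the data outside the fold and the internal
  randomness) the model is fixed, and the \<open>n/K\<close> summands of each coordinate of \<open>L\<^sub>j\<close> are i.i.d.
  and centred. The mean absolute value of such a sum is at most the square root of its second
  moment, so \<open>E \<bar>L\<^sub>j \<bullet> e\<bar> \<le> E sqrt (V\<^sub>e / K)\<close>, where \<open>V\<^sub>e\<close> is the conditional variance of coordinate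
  \<open>e\<close> given the model. All folds have the same training law, so summing over the \<open>K\<close> folds gives
  \<open>E \<Sum>\<^sub>j \<bar>L\<^sub>j \<bullet> e\<bar> \<le> E sqrt (K V\<^sub>e)\<close>, which tends to \<open>0\<close> by stability; Markov's inequality
  turns this into convergence in probability.
\<close>

lemma distr_pair_measure_rotate:
  assumes A: "prob_space A" and B: "prob_space B" and C: "prob_space C"
  shows "distr ((A \<Otimes>\<^sub>M B) \<Otimes>\<^sub>M C) ((A \<Otimes>\<^sub>M C) \<Otimes>\<^sub>M B) (\<lambda>((a, b), c). ((a, c), b))
    = (A \<Otimes>\<^sub>M C) \<Otimes>\<^sub>M B"
proof (rule measure_eqI)
  interpret A: prob_space A by fact
  interpret B: prob_space B by fact
  interpret C: prob_space C by fact
  interpret AB: pair_prob_space A B ..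
  interpret AC: pair_prob_space A C ..
  interpret BC: pair_prob_space B C ..
  interpret ABC: pair_prob_space "A \<Otimes>\<^sub>M B" C ..
  interpret ACB: pair_prob_space "A \<Otimes>\<^sub>M C" B ..
  fix S assume "S \<in> sets (distr ((A \<Otimes>\<^sub>M B) \<Otimes>\<^sub>M C) ((A \<Otimes>\<^sub>M C) \<Otimes>\<^sub>M B) (\<lambda>((a, b), c). ((a, c), b)))"
  then have S[measurable]: "S \<in> sets ((A \<Otimes>\<^sub>M C) \<Otimes>\<^sub>M B)" by simp
  have "emeasure (distr ((A \<Otimes>\<^sub>M B) \<Otimes>\<^sub>M C) ((A \<Otimes>\<^sub>M C) \<Otimes>\<^sub>M B) (\<lambda>((a, b), c). ((a, c), b))) S
      = (\<integral>\<^sup>+x. indicator S ((fst (fst x), snd x), snd (fst x)) \<partial>((A \<Otimes>\<^sub>M B) \<Otimes>\<^sub>M C))"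
    by (subst emeasure_distr)
       (auto simp: nn_integral_indicator[symmetric] split_beta' simp del: nn_integral_indicator
             intro!: nn_integral_cong split: split_indicator)
  also have "\<dots> = (\<integral>\<^sup>+a. \<integral>\<^sup>+b. \<integral>\<^sup>+c. indicator S ((a, c), b) \<partial>C \<partial>B \<partial>A)"
    using C.nn_integral_fst[of "\<lambda>x. indicator S ((fst (fst x), snd x), snd (fst x))" "A \<Otimes>\<^sub>M B"]
      B.nn_integral_fst[of "\<lambda>ab. \<integral>\<^sup>+c. indicator S ((fst ab, c), snd ab) \<partial>C" A] by simp
  also have "\<dots> = (\<integral>\<^sup>+a. \<integral>\<^sup>+c. \<integral>\<^sup>+b. indicator S ((a, c), b) \<partial>B \<partial>C \<partial>A)"
    by (intro nn_integral_cong BC.Fubini'[symmetric]) measurable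
  also have "\<dots> = emeasure ((A \<Otimes>\<^sub>M C) \<Otimes>\<^sub>M B) S"
    using C.nn_integral_fst[of "\<lambda>ac. \<integral>\<^sup>+b. indicator S (ac, b) \<partial>B" A]
      B.nn_integral_fst[of "indicator S" "A \<Otimes>\<^sub>M C"] by simp
  finally show "emeasure (distr ((A \<Otimes>\<^sub>M B) \<Otimes>\<^sub>M C) ((A \<Otimes>\<^sub>M C) \<Otimes>\<^sub>M B) (\<lambda>((a, b), c). ((a, c), b))) S
      = emeasure ((A \<Otimes>\<^sub>M C) \<Otimes>\<^sub>M B) S" .
qed simp

lemma distr_PiM_merge_pair:
  assumes P: "prob_space P" and Q: "prob_space Q"
    and "finite I" "finite J" "I \<inter> J = {}"
  shows "distr ((PiM I (\<lambda>_. P) \<Otimes>\<^sub>M PiM J (\<lambda>_. P)) \<Otimes>\<^sub>M Q) (PiM (I \<union> J) (\<lambda>_. P) \<Otimes>\<^sub>M Q)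
      (\<lambda>(x, r). (merge I J x, r)) = PiM (I \<union> J) (\<lambda>_. P) \<Otimes>\<^sub>M Q"
proof -
  interpret P: prob_space P by fact
  interpret Q: prob_space Q by fact
  interpret PP: product_prob_space "\<lambda>_. P" UNIV by unfold_locales
  interpret PI: prob_space "PiM I (\<lambda>_. P)" by (rule prob_space_PiM) (rule P)
  interpret PJ: prob_space "PiM J (\<lambda>_. P)" by (rule prob_space_PiM) (rule P)
  interpret PIJ: pair_prob_space "PiM I (\<lambda>_. P)" "PiM J (\<lambda>_. P)" ..
  have merge_m: "merge I J \<in> measurable (PiM I (\<lambda>_. P) \<Otimes>\<^sub>M PiM J (\<lambda>_. P)) (PiM (I \<union> J) (\<lambda>_. P))"
    by (rule measurable_merge)
  have "distr (PiM I (\<lambda>_. P) \<Otimes>\<^sub>M PiM J (\<lambda>_. P)) (PiM (I \<union> J) (\<lambda>_. P)) (merge I J) \<Otimes>\<^sub>M distr Q Q (\<lambda>r. r)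
      = distr ((PiM I (\<lambda>_. P) \<Otimes>\<^sub>M PiM J (\<lambda>_. P)) \<Otimes>\<^sub>M Q) (PiM (I \<union> J) (\<lambda>_. P) \<Otimes>\<^sub>M Q)
          (\<lambda>(x, r). (merge I J x, r))"
    using merge_m by (intro pair_measure_distr) (auto simp: Q.sigma_finite_measure)
  then show ?thesis
    using PP.distr_merge[of I J] assms(3-5) by (simp add: distr_id)
qed

lemma distr_PiM_split_pair:
  assumes P: "prob_space P" and Q: "prob_space Q"
    and fin: "finite I" "finite J" and disj: "I \<inter> J = {}"
  shows "distr (PiM (I \<union> J) (\<lambda>_. P) \<Otimes>\<^sub>M Q) ((PiM I (\<lambda>_. P) \<Otimes>\<^sub>M Q) \<Otimes>\<^sub>M PiM J (\<lambda>_. P))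
      (\<lambda>(z, r). ((restrict z I, r), restrict z J)) = (PiM I (\<lambda>_. P) \<Otimes>\<^sub>M Q) \<Otimes>\<^sub>M PiM J (\<lambda>_. P)"
    (is "distr ?\<Omega> ?T ?split = _")
    and "(\<lambda>(z, r). ((restrict z I, r), restrict z J))
      \<in> measurable (PiM (I \<union> J) (\<lambda>_. P) \<Otimes>\<^sub>M Q) ((PiM I (\<lambda>_. P) \<Otimes>\<^sub>M Q) \<Otimes>\<^sub>M PiM J (\<lambda>_. P))"
proof -
  interpret PI: prob_space "PiM I (\<lambda>_. P)" by (rule prob_space_PiM) (rule P)
  interpret PJ: prob_space "PiM J (\<lambda>_. P)" by (rule prob_space_PiM) (rule P)
  let ?PI = "PiM I (\<lambda>_. P)" and ?PJ = "PiM J (\<lambda>_. P)"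
  let ?merge = "\<lambda>(x, r). (merge I J x, r)" and ?rotate = "\<lambda>((a, c), r). ((a, r), c)"
  show split_m: "?split \<in> measurable ?\<Omega> ?T"
    unfolding split_beta' by measurable
  have "merge I J \<in> measurable (?PI \<Otimes>\<^sub>M ?PJ) (PiM (I \<union> J) (\<lambda>_. P))"
    by (rule measurable_merge)
  then have merge_m: "?merge \<in> measurable ((?PI \<Otimes>\<^sub>M ?PJ) \<Otimes>\<^sub>M Q) ?\<Omega>"
    by (auto simp: split_beta' intro!: measurable_Pair measurable_compose[OF measurable_fst])
  have rotate_m: "?rotate \<in> measurable ((?PI \<Otimes>\<^sub>M ?PJ) \<Otimes>\<^sub>M Q) ?T"
    unfolding split_beta' by measurable
  have "distr ?\<Omega> ?T ?split = distr (distr ((?PI \<Otimes>\<^sub>M ?PJ) \<Otimes>\<^sub>M Q) ?\<Omega> ?merge) ?T ?split"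
    using distr_PiM_merge_pair[OF P Q fin disj]
    by (rule arg_cong[where f = "\<lambda>N. distr N ?T ?split", symmetric])
  also have "\<dots> = distr ((?PI \<Otimes>\<^sub>M ?PJ) \<Otimes>\<^sub>M Q) ?T (?split \<circ> ?merge)"
    by (rule distr_distr[OF split_m merge_m])
  also have "\<dots> = distr ((?PI \<Otimes>\<^sub>M ?PJ) \<Otimes>\<^sub>M Q) ?T ?rotate"
  proof (rule distr_cong)
    fix x assume x: "x \<in> space ((?PI \<Otimes>\<^sub>M ?PJ) \<Otimes>\<^sub>M Q)"
    obtain a c r where xe: "x = ((a, c), r)" by (metis prod.collapse)
    have "a \<in> extensional I" "c \<in> extensional J"
      using x by (auto simp: xe space_pair_measure space_PiM PiE_def)
    then show "(?split \<circ> ?merge) x = ?rotate x"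
      using disj by (auto simp: xe merge_def restrict_def extensional_def fun_eq_iff)
  qed simp_all
  also have "\<dots> = ?T"
    by (rule distr_pair_measure_rotate[OF PI.prob_space_axioms PJ.prob_space_axioms Q])
  finally show "distr ?\<Omega> ?T ?split = ?T" .
qed

lemma distr_PiM_reindex_pair:
  assumes P: "prob_space P" and R: "prob_space R"
    and t: "inj_on t I" "t \<in> I \<rightarrow> J" and j: "j \<in> L"
  shows "distr (PiM J (\<lambda>_. P) \<Otimes>\<^sub>M PiM L (\<lambda>_. R)) (PiM I (\<lambda>_. P) \<Otimes>\<^sub>M R)
      (\<lambda>(a, r). (\<lambda>k\<in>I. a (t k), r j)) = PiM I (\<lambda>_. P) \<Otimes>\<^sub>M R"
proof -
  interpret R: prob_space R by fact
  have reindex_m: "(\<lambda>a. \<lambda>k\<in>I. a (t k)) \<in> measurable (PiM J (\<lambda>_. P)) (PiM I (\<lambda>_. P))"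
    using t(2) by (intro measurable_restrict) (auto simp: Pi_iff)
  have component_m: "(\<lambda>r. r j) \<in> measurable (PiM L (\<lambda>_. R)) R"
    using j by measurable
  show ?thesis
    using pair_measure_distr[OF reindex_m component_m] distr_PiM_reindex[of J "\<lambda>_. P" t I]
      distr_PiM_component[of L "\<lambda>_. R" j] P R t j
    by (simp add: R.sigma_finite_measure)
qed

lemma fold_block_subset:
  assumes "b * K = n" "j < K"
  shows "fold_block b j \<subseteq> {..<n}"
proof -
  have "(j + 1) * b \<le> K * b"
    using assms(2) by (intro mult_right_mono) auto
  then show ?thesis
    using assms(1) by (auto simp: fold_block_def mult.commute)
qed

lemma train_idx_mem:
  assumes "b * K = n" "j < K" "k < n - b"
  shows "train_idx b j k \<in> {..<n} - fold_block b j"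
  using fold_block_subset[OF assms(1,2)] assms(3)
  by (auto simp: train_idx_def fold_block_def)

lemma inj_on_train_idx: "inj_on (train_idx b j) A"
  unfolding inj_on_def train_idx_def by auto

lemma distr_train_fold_split:
  fixes P :: "'a measure" and R :: "'b measure"
  assumes P: "prob_space P" and R: "prob_space R" and nK: "b * K = n" and j: "j < K"
  shows "distr (PiM {..<n} (\<lambda>_. P) \<Otimes>\<^sub>M PiM {..<K} (\<lambda>_. R))
           ((PiM {..<n-b} (\<lambda>_. P) \<Otimes>\<^sub>M R) \<Otimes>\<^sub>M PiM (fold_block b j) (\<lambda>_. P))
           (\<lambda>(z, r). ((\<lambda>k\<in>{..<n-b}. z (train_idx b j k), r j), restrict z (fold_block b j)))
       = (PiM {..<n-b} (\<lambda>_. P) \<Otimes>\<^sub>M R) \<Otimes>\<^sub>M PiM (fold_block b j) (\<lambda>_. P)"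
      (is "distr ?\<Omega> ?T ?\<psi> = _")
    and "(\<lambda>(z, r). ((\<lambda>k\<in>{..<n-b}. z (train_idx b j k), r j), restrict z (fold_block b j)))
       \<in> measurable (PiM {..<n} (\<lambda>_. P) \<Otimes>\<^sub>M PiM {..<K} (\<lambda>_. R))
           ((PiM {..<n-b} (\<lambda>_. P) \<Otimes>\<^sub>M R) \<Otimes>\<^sub>M PiM (fold_block b j) (\<lambda>_. P))"
proof -
  let ?I = "fold_block b j"
  define J where "J = {..<n} - ?I"
  have JI: "J \<union> ?I = {..<n}" "J \<inter> ?I = {}" "finite J" "finite ?I"
    using fold_block_subset[OF nK j] by (auto simp: J_def fold_block_def)
  have t: "train_idx b j k \<in> J" if "k < n - b" for k
    using train_idx_mem[OF nK j that] unfolding J_def .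
  interpret PI: prob_space "PiM ?I (\<lambda>_. P)" by (rule prob_space_PiM) (rule P)
  interpret PK: prob_space "PiM {..<K} (\<lambda>_. R)" by (rule prob_space_PiM) (rule R)
  let ?PJ = "PiM J (\<lambda>_. P)" and ?PI = "PiM ?I (\<lambda>_. P)" and ?PK = "PiM {..<K} (\<lambda>_. R)"
    and ?Ptr = "PiM {..<n-b} (\<lambda>_. P) \<Otimes>\<^sub>M R"
  let ?split = "\<lambda>(z, r). ((restrict z J, r), restrict z ?I)"
    and ?g = "\<lambda>(a, r). (\<lambda>k\<in>{..<n-b}. a (train_idx b j k), r j)"
  note split = distr_PiM_split_pair[OF P PK.prob_space_axioms JI(3,4,2), unfolded JI(1)]
  have g_m: "?g \<in> measurable (?PJ \<Otimes>\<^sub>M ?PK) ?Ptr"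
    using t j by (auto intro!: measurable_Pair measurable_restrict simp: split_beta')
  have g_id_m: "(\<lambda>(x, c). (?g x, c)) \<in> measurable ((?PJ \<Otimes>\<^sub>M ?PK) \<Otimes>\<^sub>M ?PI) ?T"
    using g_m by (auto simp: split_beta' intro!: measurable_Pair measurable_compose[OF measurable_fst])
  have \<psi>_eq: "?\<psi> = (\<lambda>(x, c). (?g x, c)) \<circ> ?split"
    using t by (auto simp: fun_eq_iff)
  show "?\<psi> \<in> measurable ?\<Omega> ?T"
    unfolding \<psi>_eq using split(2) g_id_m by (rule measurable_comp)
  have "distr (?PJ \<Otimes>\<^sub>M ?PK) ?Ptr ?g = ?Ptr"
    using distr_PiM_reindex_pair[OF P R inj_on_train_idx[of b j "{..<n-b}"], of J j "{..<K}"] t j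
    by auto
  then have law_g_id: "distr ((?PJ \<Otimes>\<^sub>M ?PK) \<Otimes>\<^sub>M ?PI) ?T (\<lambda>(x, c). (?g x, c)) = ?T"
    using pair_measure_distr[OF g_m measurable_ident[of ?PI]]
    by (simp add: id_def PI.sigma_finite_measure)
  have "distr ?\<Omega> ?T ?\<psi> = distr (distr ?\<Omega> ((?PJ \<Otimes>\<^sub>M ?PK) \<Otimes>\<^sub>M ?PI) ?split) ?T (\<lambda>(x, c). (?g x, c))"
    unfolding \<psi>_eq by (rule distr_distr[OF g_id_m split(2), symmetric])
  also have "\<dots> = ?T"
    unfolding split(1) by (rule law_g_id)
  finally show "distr ?\<Omega> ?T ?\<psi> = ?T" .
qed

lemma PiM_cross_moment:
  fixes c :: "'p \<Rightarrow> real"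
  assumes Q: "prob_space Q" and fin: "finite I" and i: "i \<in> I" and k: "k \<in> I"
    and c_m[measurable]: "c \<in> borel_measurable Q"
    and c2: "integrable Q (\<lambda>p. (c p)\<^sup>2)" and c0: "integral\<^sup>L Q c = 0"
  shows "integrable (PiM I (\<lambda>_. Q)) (\<lambda>x. c (x i) * c (x k))"
    and "(\<integral>x. c (x i) * c (x k) \<partial>PiM I (\<lambda>_. Q)) = (if i = k then \<integral>p. (c p)\<^sup>2 \<partial>Q else 0)"
proof -
  interpret Q: prob_space Q by fact
  interpret PP: product_prob_space "\<lambda>_. Q" UNIV by unfold_locales
  have "integrable (PiM I (\<lambda>_. Q)) (\<lambda>x. c (x i) * c (x k)) \<and>
      (\<integral>x. c (x i) * c (x k) \<partial>PiM I (\<lambda>_. Q)) = (if i = k then \<integral>p. (c p)\<^sup>2 \<partial>Q else 0)"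
  proof (cases "i = k")
    case True
    have component_m: "(\<lambda>x. x i) \<in> measurable (PiM I (\<lambda>_. Q)) Q" using i by measurable
    have c2_m: "(\<lambda>p. (c p)\<^sup>2) \<in> borel_measurable Q" by measurable
    show ?thesis
      using integrable_distr_eq[OF component_m c2_m] integral_distr[OF component_m c2_m]
        distr_PiM_component[of I "\<lambda>_. Q" i] Q i c2 True
      by (simp add: power2_eq_square)
  next
    case False
    define g where "g = (\<lambda>l p. if l = i \<or> l = k then c p else 1)"
    have g_int: "integrable Q (g l)" if "l \<in> I" for l
      using Q.square_integrable_imp_integrable[OF c_m c2]
      by (cases "l = i \<or> l = k") (simp_all add: g_def)
    have g_prod: "(\<Prod>l\<in>I. g l (x l)) = c (x i) * c (x k)" for x
    proof -
      have "(\<Prod>l\<in>I. g l (x l)) = (\<Prod>l\<in>I. if l \<in> {i, k} then c (x l) else 1)"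
        by (auto simp: g_def intro!: prod.cong)
      also have "\<dots> = (\<Prod>l\<in>{i, k}. c (x l))"
        using fin i k by (subst prod.If_cases) (auto intro!: arg_cong2[where f=prod] simp: Int_absorb1)
      finally show ?thesis using False by simp
    qed
    have "(\<Prod>l\<in>I. integral\<^sup>L Q (g l)) = 0"
      using fin i c0 by (intro prod_zero bexI[of _ i]) (auto simp: g_def)
    then show ?thesis
      using PP.product_integrable_prod[of I g, OF fin g_int] PP.product_integral_prod[of I g, OF fin g_int] False
      by (simp add: g_prod)
  qed
  then show "integrable (PiM I (\<lambda>_. Q)) (\<lambda>x. c (x i) * c (x k))"
    and "(\<integral>x. c (x i) * c (x k) \<partial>PiM I (\<lambda>_. Q)) = (if i = k then \<integral>p. (c p)\<^sup>2 \<partial>Q else 0)"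
    by auto
qed

lemma PiM_sum_second_moment:
  fixes c :: "'p \<Rightarrow> real"
  assumes Q: "prob_space Q" and fin: "finite I" and c_m: "c \<in> borel_measurable Q"
    and c2: "integrable Q (\<lambda>p. (c p)\<^sup>2)" and c0: "integral\<^sup>L Q c = 0"
  shows "integrable (PiM I (\<lambda>_. Q)) (\<lambda>x. (\<Sum>i\<in>I. c (x i))\<^sup>2)"
    and "(\<integral>x. (\<Sum>i\<in>I. c (x i))\<^sup>2 \<partial>PiM I (\<lambda>_. Q)) = card I * (\<integral>p. (c p)\<^sup>2 \<partial>Q)"
proof -
  note cross = PiM_cross_moment[OF Q fin _ _ c_m c2 c0]
  have square: "(\<Sum>i\<in>I. c (x i))\<^sup>2 = (\<Sum>i\<in>I. \<Sum>k\<in>I. c (x i) * c (x k))" for x :: "_ \<Rightarrow> 'p"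
    unfolding power2_eq_square by (rule sum_product)
  show "integrable (PiM I (\<lambda>_. Q)) (\<lambda>x. (\<Sum>i\<in>I. c (x i))\<^sup>2)"
    unfolding square using cross(1) by (intro Bochner_Integration.integrable_sum) auto
  have "(\<integral>x. (\<Sum>i\<in>I. c (x i))\<^sup>2 \<partial>PiM I (\<lambda>_. Q))
      = (\<Sum>i\<in>I. \<Sum>k\<in>I. if i = k then \<integral>p. (c p)\<^sup>2 \<partial>Q else 0)"
    unfolding square using cross
    by (simp add: Bochner_Integration.integral_sum Bochner_Integration.integrable_sum)
  also have "\<dots> = card I * (\<integral>p. (c p)\<^sup>2 \<partial>Q)"
    using fin by (simp add: sum.delta)
  finally show "(\<integral>x. (\<Sum>i\<in>I. c (x i))\<^sup>2 \<partial>PiM I (\<lambda>_. Q)) = card I * (\<integral>p. (c p)\<^sup>2 \<partial>Q)" .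
qed

lemma nn_integral_abs_sum_PiM_le:
  fixes c :: "'p \<Rightarrow> real"
  assumes Q: "prob_space Q" and fin: "finite I" and c_m[measurable]: "c \<in> borel_measurable Q"
    and c2: "integrable Q (\<lambda>p. (c p)\<^sup>2)" and c0: "integral\<^sup>L Q c = 0"
  shows "(\<integral>\<^sup>+x. ennreal \<bar>\<Sum>i\<in>I. c (x i)\<bar> \<partial>PiM I (\<lambda>_. Q))
    \<le> ennreal (sqrt (card I * (\<integral>p. (c p)\<^sup>2 \<partial>Q)))"
proof -
  interpret PI: prob_space "PiM I (\<lambda>_. Q)" by (rule prob_space_PiM) (rule Q)
  define S where "S = (\<lambda>x. \<Sum>i\<in>I. c (x i))"
  have S2: "integrable (PiM I (\<lambda>_. Q)) (\<lambda>x. (S x)\<^sup>2)"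
      "(\<integral>x. (S x)\<^sup>2 \<partial>PiM I (\<lambda>_. Q)) = card I * (\<integral>p. (c p)\<^sup>2 \<partial>Q)"
    using PiM_sum_second_moment[OF Q fin c_m c2 c0] by (simp_all add: S_def)
  have S_m: "S \<in> borel_measurable (PiM I (\<lambda>_. Q))" unfolding S_def by measurable
  have abs_S_int: "integrable (PiM I (\<lambda>_. Q)) (\<lambda>x. \<bar>S x\<bar>)"
    using PI.square_integrable_imp_integrable[OF S_m S2(1)] by auto
  \<comment> \<open>Jensen: the mean of \<open>\<bar>S\<bar>\<close> is bounded by its root mean square, as its variance is nonnegative.\<close>
  have "0 \<le> PI.variance (\<lambda>x. \<bar>S x\<bar>)" by (rule Bochner_Integration.integral_nonneg) auto
  then have "(\<integral>x. \<bar>S x\<bar> \<partial>PiM I (\<lambda>_. Q))\<^sup>2 \<le> (\<integral>x. (S x)\<^sup>2 \<partial>PiM I (\<lambda>_. Q))"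
    using PI.variance_eq[OF abs_S_int] S2(1) by simp
  then have "(\<integral>x. \<bar>S x\<bar> \<partial>PiM I (\<lambda>_. Q)) \<le> sqrt (card I * (\<integral>p. (c p)\<^sup>2 \<partial>Q))"
    using S2(2) by (intro real_le_rsqrt) simp
  moreover have "(\<integral>\<^sup>+x. ennreal \<bar>S x\<bar> \<partial>PiM I (\<lambda>_. Q)) = ennreal (\<integral>x. \<bar>S x\<bar> \<partial>PiM I (\<lambda>_. Q))"
    by (rule nn_integral_eq_integral[OF abs_S_int]) auto
  ultimately show ?thesis unfolding S_def by (simp add: ennreal_leI)
qed

lemma nn_integral_abs_centered_sum_le:
  fixes h :: "'x \<Rightarrow> real" and P :: "('x \<times> 'y) measure"
  assumes P: "prob_space P" and fst_m[measurable]: "fst \<in> measurable P SX" and fin: "finite I"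
    and h_m[measurable]: "h \<in> borel_measurable SX"
    and h2: "integrable (distr P SX fst) (\<lambda>x. (h x)\<^sup>2)"
  shows "(\<integral>\<^sup>+xs. ennreal \<bar>\<Sum>i\<in>I. h (fst (xs i)) - (\<integral>x. h x \<partial>distr P SX fst)\<bar> \<partial>PiM I (\<lambda>_. P))
    \<le> ennreal (sqrt (card I * ((\<integral>x. (h x)\<^sup>2 \<partial>distr P SX fst) - (\<integral>x. h x \<partial>distr P SX fst)\<^sup>2)))"
proof -
  interpret P: prob_space P by fact
  interpret PX: prob_space "distr P SX fst" by (rule P.prob_space_distr) (rule fst_m)
  define \<mu> where "\<mu> = (\<integral>x. h x \<partial>distr P SX fst)"
  define g :: "'x \<times> 'y \<Rightarrow> real" where "g = (\<lambda>p. h (fst p) - \<mu>)"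
  have h_P: "integrable P (\<lambda>p. h (fst p))"
    using PX.square_integrable_imp_integrable[OF _ h2] by (simp add: integrable_distr_eq)
  have h2_P: "integrable P (\<lambda>p. (h (fst p))\<^sup>2)" using h2 by (simp add: integrable_distr_eq)
  have g_m: "g \<in> borel_measurable P" unfolding g_def by measurable
  have g2: "integrable P (\<lambda>p. (g p)\<^sup>2)"
    unfolding g_def power2_diff using h_P h2_P by auto
  have g0: "integral\<^sup>L P g = 0"
    unfolding g_def using h_P by (simp add: integral_distr[symmetric] \<mu>_def P.prob_space)
  have "(\<integral>p. (g p)\<^sup>2 \<partial>P) = (\<integral>p. (h (fst p))\<^sup>2 \<partial>P) - 2 * \<mu> * (\<integral>p. h (fst p) \<partial>P) + \<mu>\<^sup>2"
    unfolding g_def power2_diff using h_P h2_P by (simp add: P.prob_space)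
  also have "\<dots> = (\<integral>x. (h x)\<^sup>2 \<partial>distr P SX fst) - \<mu>\<^sup>2"
    by (simp add: integral_distr \<mu>_def power2_eq_square)
  finally have g2_eq: "(\<integral>p. (g p)\<^sup>2 \<partial>P) = (\<integral>x. (h x)\<^sup>2 \<partial>distr P SX fst) - \<mu>\<^sup>2" .
  have "(\<Sum>i\<in>I. h (fst (xs i)) - \<mu>) = (\<Sum>i\<in>I. g (xs i))" for xs
    by (simp add: g_def)
  then show ?thesis
    using nn_integral_abs_sum_PiM_le[OF P fin g_m g2 g0] by (simp add: g2_eq \<mu>_def)
qed

lemma nn_integral_abs_pair_centered_sum_le:
  fixes Y :: "'u measure" and P :: "('x \<times> 'y) measure" and SX :: "'x measure"
    and h :: "'u \<Rightarrow> 'x \<Rightarrow> real" and F :: "'u \<times> ('i \<Rightarrow> 'x \<times> 'y) \<Rightarrow> real"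
  assumes Y: "prob_space Y" and P: "prob_space P" and fst_m[measurable]: "fst \<in> measurable P SX"
    and fin: "finite I" and c: "0 \<le> c"
    and h_m[measurable]: "(\<lambda>(u, x). h u x) \<in> borel_measurable (Y \<Otimes>\<^sub>M SX)"
    and F_m[measurable]: "F \<in> borel_measurable (Y \<Otimes>\<^sub>M PiM I (\<lambda>_. P))"
    and F_eq: "AE u in Y. integrable (distr P SX fst) (\<lambda>x. (h u x)\<^sup>2) \<and>
       (\<forall>xs\<in>space (PiM I (\<lambda>_. P)).
          F (u, xs) = c * (\<Sum>i\<in>I. h u (fst (xs i)) - (\<integral>x. h u x \<partial>distr P SX fst)))"
  shows "(\<integral>\<^sup>+z. ennreal \<bar>F z\<bar> \<partial>(Y \<Otimes>\<^sub>M PiM I (\<lambda>_. P)))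
    \<le> (\<integral>\<^sup>+u. ennreal (c * sqrt (card I * ((\<integral>x. (h u x)\<^sup>2 \<partial>distr P SX fst)
          - (\<integral>x. h u x \<partial>distr P SX fst)\<^sup>2))) \<partial>Y)"
proof -
  interpret PI: prob_space "PiM I (\<lambda>_. P)" by (rule prob_space_PiM) (rule P)
  have "(\<integral>\<^sup>+z. ennreal \<bar>F z\<bar> \<partial>(Y \<Otimes>\<^sub>M PiM I (\<lambda>_. P)))
      = (\<integral>\<^sup>+u. \<integral>\<^sup>+xs. ennreal \<bar>F (u, xs)\<bar> \<partial>PiM I (\<lambda>_. P) \<partial>Y)"
    by (rule PI.nn_integral_fst[symmetric]) measurable
  also have "\<dots> \<le> (\<integral>\<^sup>+u. ennreal (c * sqrt (card I * ((\<integral>x. (h u x)\<^sup>2 \<partial>distr P SX fst)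
          - (\<integral>x. h u x \<partial>distr P SX fst)\<^sup>2))) \<partial>Y)"
    using F_eq AE_space[of Y]
  proof (intro nn_integral_mono_AE, eventually_elim)
    case (elim u)
    then have h_u_m[measurable]: "h u \<in> borel_measurable SX" by measurable
    have "(\<integral>\<^sup>+xs. ennreal \<bar>F (u, xs)\<bar> \<partial>PiM I (\<lambda>_. P))
        = (\<integral>\<^sup>+xs. ennreal c * ennreal \<bar>\<Sum>i\<in>I. h u (fst (xs i)) - (\<integral>x. h u x \<partial>distr P SX fst)\<bar>
            \<partial>PiM I (\<lambda>_. P))"
      using elim c by (intro nn_integral_cong) (simp add: abs_mult ennreal_mult)
    also have "\<dots> = ennreal c * (\<integral>\<^sup>+xs. ennreal \<bar>\<Sum>i\<in>I. h u (fst (xs i))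
        - (\<integral>x. h u x \<partial>distr P SX fst)\<bar> \<partial>PiM I (\<lambda>_. P))"
      by (rule nn_integral_cmult) measurable
    also have "\<dots> \<le> ennreal c * ennreal (sqrt (card I * ((\<integral>x. (h u x)\<^sup>2 \<partial>distr P SX fst)
        - (\<integral>x. h u x \<partial>distr P SX fst)\<^sup>2)))"
      using nn_integral_abs_centered_sum_le[OF P fst_m fin h_u_m] elim by (intro mult_left_mono) auto
    finally show ?case using c by (simp add: ennreal_mult')
  qed
  finally show ?thesis .
qed

lemma (in prob_space) distr_restrict_iid_eq_PiM:
  assumes "I \<noteq> {}" and X_m: "\<And>i. i \<in> I \<Longrightarrow> X i \<in> measurable M S"
    and X_distr: "\<And>i. i \<in> I \<Longrightarrow> distr M S (X i) = S" and indep: "indep_vars (\<lambda>_. S) X I"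
  shows "distr M (PiM I (\<lambda>_. S)) (\<lambda>w. \<lambda>i\<in>I. X i w) = PiM I (\<lambda>_. S)"
proof -
  have "distr M (PiM I (\<lambda>_. S)) (\<lambda>w. \<lambda>i\<in>I. X i w) = PiM I (\<lambda>i. distr M S (X i))"
    using indep_vars_iff_distr_eq_PiM'[of I X "\<lambda>_. S"] assms by auto
  also have "\<dots> = PiM I (\<lambda>_. S)" using X_distr by (intro PiM_cong) auto
  finally show ?thesis .
qed

lemma (in prob_space) distr_Pair_eq_pair_measure:
  assumes X_m: "X \<in> measurable M S" and Y_m: "Y \<in> measurable M T"
    and X_distr: "distr M S X = S" and Y_distr: "distr M T Y = T"
    and indep: "\<And>B C. B \<in> sets S \<Longrightarrow> C \<in> sets T \<Longrightarrow>
      prob {w \<in> space M. X w \<in> B \<and> Y w \<in> C} = prob {w \<in> space M. X w \<in> B} * prob {w \<in> space M. Y w \<in> C}"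
  shows "distr M (S \<Otimes>\<^sub>M T) (\<lambda>w. (X w, Y w)) = S \<Otimes>\<^sub>M T"
proof (rule pair_measure_eqI[symmetric])
  interpret S: prob_space S using prob_space_distr[OF X_m] X_distr by simp
  interpret T: prob_space T using prob_space_distr[OF Y_m] Y_distr by simp
  show "sigma_finite_measure S" "sigma_finite_measure T"
    by (rule S.sigma_finite_measure, rule T.sigma_finite_measure)
  show "sets (S \<Otimes>\<^sub>M T) = sets (distr M (S \<Otimes>\<^sub>M T) (\<lambda>w. (X w, Y w)))" by simp
  fix B C assume B: "B \<in> sets S" and C: "C \<in> sets T"
  have XY_m: "(\<lambda>w. (X w, Y w)) \<in> measurable M (S \<Otimes>\<^sub>M T)" using X_m Y_m by (rule measurable_Pair)
  have "emeasure S B = prob {w \<in> space M. X w \<in> B}"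
    by (subst X_distr[symmetric]) (simp add: emeasure_distr[OF X_m B] emeasure_eq_measure vimage_def Int_def conj_commute)
  moreover have "emeasure T C = prob {w \<in> space M. Y w \<in> C}"
    by (subst Y_distr[symmetric]) (simp add: emeasure_distr[OF Y_m C] emeasure_eq_measure vimage_def Int_def conj_commute)
  moreover have "emeasure (distr M (S \<Otimes>\<^sub>M T) (\<lambda>w. (X w, Y w))) (B \<times> C)
      = prob {w \<in> space M. X w \<in> B \<and> Y w \<in> C}"
    using B C by (simp add: emeasure_distr[OF XY_m] emeasure_eq_measure vimage_def Int_def conj_commute)
  ultimately show "emeasure S B * emeasure T C = emeasure (distr M (S \<Otimes>\<^sub>M T) (\<lambda>w. (X w, Y w))) (B \<times> C)"
    by (simp add: indep[OF B C] ennreal_mult)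
qed

lemma inner_Basis_diff_power2_le:
  fixes a b e :: "'a::euclidean_space"
  assumes e: "e \<in> Basis"
  shows "((a - b) \<bullet> e)\<^sup>2 \<le> 2 * (norm a)\<^sup>2 + 2 * (norm b)\<^sup>2"
proof -
  have "\<bar>(a - b) \<bullet> e\<bar> \<le> norm a + norm b"
    using Basis_le_norm[OF e, of "a - b"] norm_triangle_ineq4[of a b] by linarith
  then have "((a - b) \<bullet> e)\<^sup>2 \<le> (norm a + norm b)\<^sup>2"
    by (metis abs_ge_zero power2_abs power_mono)
  also have "\<dots> \<le> 2 * (norm a)\<^sup>2 + 2 * (norm b)\<^sup>2"
    by (simp add: power2_sum) (metis add.commute mult_2 sum_squares_bound power2_eq_square)
  finally show ?thesis .
qed

lemma cond_var_coord_nonneg: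
  assumes PX: "prob_space PX"
    and f_int: "integrable PX (\<lambda>x. G x (f x))" and fb_int: "integrable PX (\<lambda>x. G x (fb x))"
    and sq_int: "integrable PX (\<lambda>x. ((G x (f x) - G x (fb x)) \<bullet> e)\<^sup>2)"
  shows "0 \<le> cond_var_coord PX G f fb e"
proof -
  interpret PX: prob_space PX by fact
  have "integrable PX (\<lambda>x. (G x (f x) - G x (fb x)) \<bullet> e)" using f_int fb_int by auto
  moreover have "0 \<le> PX.variance (\<lambda>x. (G x (f x) - G x (fb x)) \<bullet> e)"
    by (rule Bochner_Integration.integral_nonneg) auto
  ultimately show ?thesis using PX.variance_eq sq_int by (simp add: cond_var_coord_def)
qed

lemma inner_L_fold:
  assumes "integrable PX (\<lambda>x. G x (f x))" "integrable PX (\<lambda>x. G x (fb x))"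
  shows "L_fold n I PX G f fb Xs \<bullet> e
    = (1 / sqrt n) * (\<Sum>i\<in>I. (G (Xs i) (f (Xs i)) - G (Xs i) (fb (Xs i))) \<bullet> e
        - (\<integral>x. (G x (f x) - G x (fb x)) \<bullet> e \<partial>PX))"
  using assms by (simp add: L_fold_def inner_sum_left inner_diff_left algebra_simps)

lemma mult_sqrt_divide_self:
  fixes c v :: real
  assumes "0 \<le> c"
  shows "c * sqrt (v / c) = sqrt (c * v)"
proof -
  have "sqrt (c * v) = sqrt (c\<^sup>2 * (v / c))"
    by (cases "c = 0") (simp_all add: power2_eq_square)
  also have "\<dots> = c * sqrt (v / c)"
    using assms by (simp only: real_sqrt_mult real_sqrt_abs abs_of_nonneg)
  finally show ?thesis ..
qed

lemma (in prob_space) prob_less_le_nn_integral: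
  assumes U_m[measurable]: "U \<in> borel_measurable M" and U_nonneg: "\<And>w. 0 \<le> U w"
    and bound: "(\<integral>\<^sup>+w. ennreal (U w) \<partial>M) \<le> ennreal B" and B: "0 \<le> B" and eps: "0 < \<epsilon>"
  shows "prob {w \<in> space M. \<epsilon> < U w} \<le> B / \<epsilon>"
proof -
  have "{w \<in> space M. \<epsilon> < U w} \<subseteq> {w \<in> space M. 1 \<le> ennreal (1 / \<epsilon>) * ennreal (U w)}"
  proof safe
    fix w assume "\<epsilon> < U w"
    then have "1 \<le> U w / \<epsilon>" using eps by simp
    then show "1 \<le> ennreal (1 / \<epsilon>) * ennreal (U w)"
      using eps by (simp add: ennreal_mult'[symmetric] ennreal_1[symmetric] del: ennreal_1)
  qed
  then have "emeasure M {w \<in> space M. \<epsilon> < U w}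
      \<le> emeasure M {w \<in> space M. 1 \<le> ennreal (1 / \<epsilon>) * ennreal (U w)}"
    by (rule emeasure_mono) measurable
  also have "\<dots> \<le> ennreal (1 / \<epsilon>) * (\<integral>\<^sup>+w. ennreal (U w) * indicator (space M) w \<partial>M)"
    by (rule nn_integral_Markov_inequality) auto
  also have "(\<integral>\<^sup>+w. ennreal (U w) * indicator (space M) w \<partial>M) = (\<integral>\<^sup>+w. ennreal (U w) \<partial>M)"
    by (intro nn_integral_cong) simp
  also have "ennreal (1 / \<epsilon>) * \<dots> \<le> ennreal (1 / \<epsilon>) * ennreal B"
    by (intro mult_left_mono bound) simp
  also have "\<dots> = ennreal (B / \<epsilon>)" using eps by (simp add: ennreal_mult'[symmetric])
  finally show ?thesis using B eps by (simp add: emeasure_eq_measure ennreal_le_iff)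
qed

locale cross_fitting =
  fixes SX :: "'x measure" and P :: "('x \<times> 'y::euclidean_space) measure"
    and G :: "'x \<Rightarrow> 'y \<Rightarrow> 'd::euclidean_space" and M :: "'w measure" and n K :: nat
    and Z :: "nat \<Rightarrow> 'w \<Rightarrow> 'x \<times> 'y" and R :: "'r measure" and xi :: "nat \<Rightarrow> 'w \<Rightarrow> 'r"
    and A :: "(nat \<Rightarrow> 'x \<times> 'y) \<Rightarrow> 'r \<Rightarrow> 'x \<Rightarrow> 'y"
  assumes P_sets: "sets P = sets (SX \<Otimes>\<^sub>M (borel :: 'y measure))"
    and G_measurable[measurable]: "(\<lambda>(x, y). G x y) \<in> borel_measurable (SX \<Otimes>\<^sub>M (borel :: 'y measure))"
    and M_prob: "prob_space M"
    and n_pos: "0 < n" and K_pos: "0 < K" and K_dvd: "K dvd n"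
    and Z_meas: "\<And>i. i < n \<Longrightarrow> Z i \<in> measurable M P"
    and Z_distr: "\<And>i. i < n \<Longrightarrow> distr M P (Z i) = P"
    and Z_indep: "prob_space.indep_vars M (\<lambda>_. P) Z {..<n}"
    and xi_meas: "\<And>j. j < K \<Longrightarrow> xi j \<in> measurable M R"
    and xi_distr: "\<And>j. j < K \<Longrightarrow> distr M R (xi j) = R"
    and xi_indep: "prob_space.indep_vars M (\<lambda>_. R) xi {..<K}"
    and data_xi_indep: "\<And>B C. B \<in> sets (PiM {..<n} (\<lambda>_. P)) \<Longrightarrow> C \<in> sets (PiM {..<K} (\<lambda>_. R)) \<Longrightarrow>
          measure M {w \<in> space M. (\<lambda>i\<in>{..<n}. Z i w) \<in> B \<and> (\<lambda>j\<in>{..<K}. xi j w) \<in> C}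
          = measure M {w \<in> space M. (\<lambda>i\<in>{..<n}. Z i w) \<in> B}
            * measure M {w \<in> space M. (\<lambda>j\<in>{..<K}. xi j w) \<in> C}"
    and A_meas: "(\<lambda>((d, r), x). A d r x) \<in> borel_measurable
          ((PiM {..< n - n div K} (\<lambda>_. P) \<Otimes>\<^sub>M R) \<Otimes>\<^sub>M SX)"
    and G_fit_L2: "integrable (M \<Otimes>\<^sub>M distr P SX fst)
          (\<lambda>(w, x). (norm (G x (fitted A n (n div K) Z xi 0 w x)))\<^sup>2)"
    and G_fbar_L2: "integrable (distr P SX fst)
          (\<lambda>x. (norm (G x (fbar M (fitted A n (n div K) Z xi 0) x)))\<^sup>2)"
begin

text \<open>
  Folds are indexed from \<open>0\<close>. \<open>train j w\<close> is the input of the algorithm for fold \<open>j\<close>, so that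
  \<open>fit j w = case_prod A (train j w)\<close>; its law \<open>Ptrain\<close> does not depend on \<open>j\<close>, and
  \<open>train_var e u\<close> is the conditional variance of coordinate \<open>e\<close> for the model trained on \<open>u\<close>.
\<close>

abbreviation "PX \<equiv> distr P SX fst"
abbreviation "fit \<equiv> fitted A n (n div K) Z xi"
abbreviation "fb \<equiv> fbar M (fit 0)"
abbreviation "Ptrain \<equiv> PiM {..<n - n div K} (\<lambda>_. P) \<Otimes>\<^sub>M R"
abbreviation "train j w \<equiv> (train_data n (n div K) j Z w, xi j w)"
abbreviation "fold_data j w \<equiv> restrict (\<lambda>i. Z i w) (fold_block (n div K) j)"
abbreviation "train_var e u \<equiv> cond_var_coord PX G (case_prod A u) fb e"
abbreviation "L_fit j w \<equiv> L_fold n (fold_block (n div K) j) PX G (fit j w) fb (\<lambda>i. fst (Z i w))"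

sublocale M: prob_space M by (rule M_prob)

lemma prob_space_P: "prob_space P"
  using M.prob_space_distr[OF Z_meas[OF n_pos]] Z_distr[OF n_pos] by simp

lemma prob_space_R: "prob_space R"
  using M.prob_space_distr[OF xi_meas[OF K_pos]] xi_distr[OF K_pos] by simp

sublocale P: prob_space P by (rule prob_space_P)

lemma fst_measurable[measurable]: "fst \<in> measurable P SX"
  by (simp add: measurable_cong_sets[OF P_sets refl])

sublocale PX: prob_space PX by (rule P.prob_space_distr) (rule fst_measurable)

sublocale Ptrain: prob_space Ptrain
  by (intro prob_space_pair prob_space_PiM prob_space_P prob_space_R)

lemma fold_size: "n div K * K = n"
  using K_dvd by simp

lemma fit_eq: "fit j w = case_prod A (train j w)"
  by (simp add: fitted_def)

lemma distr_data_randomness: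
  "distr M (PiM {..<n} (\<lambda>_. P) \<Otimes>\<^sub>M PiM {..<K} (\<lambda>_. R))
     (\<lambda>w. (\<lambda>i\<in>{..<n}. Z i w, \<lambda>j\<in>{..<K}. xi j w)) = PiM {..<n} (\<lambda>_. P) \<Otimes>\<^sub>M PiM {..<K} (\<lambda>_. R)"
  using n_pos K_pos Z_meas xi_meas
  by (intro M.distr_Pair_eq_pair_measure measurable_restrict M.distr_restrict_iid_eq_PiM
      Z_distr Z_indep xi_distr xi_indep data_xi_indep) auto

lemma train_measurable: "j < K \<Longrightarrow> train j \<in> measurable M Ptrain"
  using train_idx_mem[OF fold_size] Z_meas xi_meas
  by (auto simp: train_data_def intro!: measurable_Pair measurable_restrict)

lemma fold_data_measurable:
  "j < K \<Longrightarrow> fold_data j \<in> measurable M (PiM (fold_block (n div K) j) (\<lambda>_. P))"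
  using fold_block_subset[OF fold_size] Z_meas by (intro measurable_restrict) auto

lemma distr_train_fold:
  assumes j: "j < K"
  shows "distr M (Ptrain \<Otimes>\<^sub>M PiM (fold_block (n div K) j) (\<lambda>_. P)) (\<lambda>w. (train j w, fold_data j w))
    = Ptrain \<Otimes>\<^sub>M PiM (fold_block (n div K) j) (\<lambda>_. P)"
proof -
  let ?\<Omega> = "PiM {..<n} (\<lambda>_. P) \<Otimes>\<^sub>M PiM {..<K} (\<lambda>_. R)"
  let ?W = "\<lambda>w. (\<lambda>i\<in>{..<n}. Z i w, \<lambda>j\<in>{..<K}. xi j w)"
  let ?\<psi> = "\<lambda>(z, r). ((\<lambda>k\<in>{..<n - n div K}. z (train_idx (n div K) j k), r j),
      restrict z (fold_block (n div K) j))"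
  note split = distr_train_fold_split[OF prob_space_P prob_space_R fold_size j]
  have W_m: "?W \<in> measurable M ?\<Omega>"
    using Z_meas xi_meas by (intro measurable_Pair measurable_restrict) auto
  have "distr M (Ptrain \<Otimes>\<^sub>M PiM (fold_block (n div K) j) (\<lambda>_. P)) (\<lambda>w. (train j w, fold_data j w))
      = distr M (Ptrain \<Otimes>\<^sub>M PiM (fold_block (n div K) j) (\<lambda>_. P)) (?\<psi> \<circ> ?W)"
    using train_idx_mem[OF fold_size j] fold_block_subset[OF fold_size j] j
    by (intro distr_cong) (auto simp: train_data_def restrict_def fun_eq_iff)
  also have "\<dots> = distr (distr M ?\<Omega> ?W) (Ptrain \<Otimes>\<^sub>M PiM (fold_block (n div K) j) (\<lambda>_. P)) ?\<psi>"
    using split(2) W_m by (intro distr_distr[symmetric])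
  also have "\<dots> = Ptrain \<Otimes>\<^sub>M PiM (fold_block (n div K) j) (\<lambda>_. P)"
    unfolding distr_data_randomness by (rule split(1))
  finally show ?thesis .
qed

lemma distr_train:
  assumes j: "j < K"
  shows "distr M Ptrain (train j) = Ptrain"
proof -
  interpret PI: prob_space "PiM (fold_block (n div K) j) (\<lambda>_. P)"
    by (rule prob_space_PiM) (rule prob_space_P)
  have "distr M Ptrain (train j)
      = distr (distr M (Ptrain \<Otimes>\<^sub>M PiM (fold_block (n div K) j) (\<lambda>_. P)) (\<lambda>w. (train j w, fold_data j w)))
          Ptrain fst"
    using measurable_Pair[OF train_measurable[OF j] fold_data_measurable[OF j]]
    by (subst distr_distr) (auto simp: comp_def)
  also have "\<dots> = Ptrain" unfolding distr_train_fold[OF j] by (rule PI.distr_pair_fst)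
  finally show ?thesis .
qed

lemma A_measurable[measurable]: "(\<lambda>(u, x). case_prod A u x) \<in> borel_measurable (Ptrain \<Otimes>\<^sub>M SX)"
  using A_meas by (simp add: split_beta' case_prod_beta')

lemma G_A_measurable[measurable]:
  "(\<lambda>(u, x). G x (case_prod A u x)) \<in> borel_measurable (Ptrain \<Otimes>\<^sub>M SX)"
proof -
  have "(\<lambda>z. (snd z, case_prod A (fst z) (snd z))) \<in> measurable (Ptrain \<Otimes>\<^sub>M SX) (SX \<Otimes>\<^sub>M (borel :: 'y measure))"
    using A_measurable by (simp add: split_beta')
  from measurable_comp[OF this G_measurable] show ?thesis by (simp add: comp_def split_beta')
qed

lemma fb_measurable[measurable]: "fb \<in> borel_measurable SX"
proof -
  have "(\<lambda>z. (train 0 (snd z), fst z)) \<in> measurable (SX \<Otimes>\<^sub>M M) (Ptrain \<Otimes>\<^sub>M SX)"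
    using train_measurable[OF K_pos] by measurable
  from measurable_comp[OF this A_measurable]
  have "(\<lambda>(x, w). fit 0 w x) \<in> borel_measurable (SX \<Otimes>\<^sub>M M)"
    by (simp add: comp_def split_beta' fit_eq)
  then show ?thesis unfolding fbar_def by (rule M.borel_measurable_lebesgue_integral)
qed

lemma G_fb_measurable[measurable]: "(\<lambda>x. G x (fb x)) \<in> borel_measurable SX"
proof -
  have "(\<lambda>x. (x, fb x)) \<in> measurable SX (SX \<Otimes>\<^sub>M (borel :: 'y measure))" by measurable
  from measurable_comp[OF this G_measurable] show ?thesis by (simp add: comp_def)
qed

lemma integrable_G_fb: "integrable PX (\<lambda>x. G x (fb x))"
  using PX.square_integrable_imp_integrable[OF _ G_fbar_L2] by (simp add: integrable_norm_iff)

lemma AE_G_A_L2: "AE u in Ptrain. integrable PX (\<lambda>x. (norm (G x (case_prod A u x)))\<^sup>2)"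
proof -
  interpret Ptrain_PX: pair_prob_space Ptrain PX ..
  let ?g = "\<lambda>(u, x). (norm (G x (case_prod A u x)))\<^sup>2"
  have shift_m: "(\<lambda>(w, x). (train 0 w, x)) \<in> measurable (M \<Otimes>\<^sub>M PX) (Ptrain \<Otimes>\<^sub>M PX)"
    using train_measurable[OF K_pos] by measurable
  have g_m: "?g \<in> borel_measurable (Ptrain \<Otimes>\<^sub>M PX)"
    by (simp add: measurable_cong_sets[OF sets_pair_measure_cong[OF refl sets_distr] refl])
  have "distr (M \<Otimes>\<^sub>M PX) (Ptrain \<Otimes>\<^sub>M PX) (\<lambda>(w, x). (train 0 w, x)) = Ptrain \<Otimes>\<^sub>M PX"
    using pair_measure_distr[OF train_measurable[OF K_pos] measurable_ident[of PX]] distr_train[OF K_pos]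
    by (simp add: id_def PX.sigma_finite_measure)
  moreover have "integrable (M \<Otimes>\<^sub>M PX) (\<lambda>z. ?g ((\<lambda>(w, x). (train 0 w, x)) z))"
    using G_fit_L2 by (simp add: fit_eq split_beta')
  ultimately have "integrable (Ptrain \<Otimes>\<^sub>M PX) ?g"
    using integrable_distr_eq[OF shift_m g_m] by simp
  from Ptrain_PX.AE_integrable_fst'[OF this] show ?thesis by simp
qed

lemma AE_train_regular:
  "AE u in Ptrain. integrable PX (\<lambda>x. G x (case_prod A u x)) \<and>
     (\<forall>e\<in>Basis. integrable PX (\<lambda>x. ((G x (case_prod A u x) - G x (fb x)) \<bullet> e)\<^sup>2))"
  using AE_G_A_L2 AE_space[of Ptrain]
proof eventually_elim
  case (elim u)
  then have G_A_m: "(\<lambda>x. G x (case_prod A u x)) \<in> borel_measurable PX" by measurable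
  show ?case
  proof (intro conjI ballI)
    show "integrable PX (\<lambda>x. G x (case_prod A u x))"
      using PX.square_integrable_imp_integrable[OF _ elim(1)] G_A_m by (simp add: integrable_norm_iff)
    show "integrable PX (\<lambda>x. ((G x (case_prod A u x) - G x (fb x)) \<bullet> e)\<^sup>2)" if e: "e \<in> Basis" for e
    proof (rule Bochner_Integration.integrable_bound)
      show "integrable PX (\<lambda>x. 2 * (norm (G x (case_prod A u x)))\<^sup>2 + 2 * (norm (G x (fb x)))\<^sup>2)"
        using elim(1) G_fbar_L2 by simp
      show "(\<lambda>x. ((G x (case_prod A u x) - G x (fb x)) \<bullet> e)\<^sup>2) \<in> borel_measurable PX"
        using G_A_m by measurable
      show "AE x in PX. norm (((G x (case_prod A u x) - G x (fb x)) \<bullet> e)\<^sup>2)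
          \<le> norm (2 * (norm (G x (case_prod A u x)))\<^sup>2 + 2 * (norm (G x (fb x)))\<^sup>2)"
        using inner_Basis_diff_power2_le[OF e] by simp
    qed
  qed
qed

lemma AE_train_var_nonneg: "AE u in Ptrain. \<forall>e\<in>Basis. 0 \<le> train_var e u"
  using AE_train_regular
  by eventually_elim
    (use cond_var_coord_nonneg[of PX G _ fb] PX.prob_space_axioms integrable_G_fb in blast)

lemma train_var_measurable: "train_var e \<in> borel_measurable Ptrain"
proof -
  have "(\<lambda>(u, x). ((G x (case_prod A u x) - G x (fb x)) \<bullet> e)\<^sup>2) \<in> borel_measurable (Ptrain \<Otimes>\<^sub>M PX)"
    "(\<lambda>(u, x). (G x (case_prod A u x) - G x (fb x)) \<bullet> e) \<in> borel_measurable (Ptrain \<Otimes>\<^sub>M PX)"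
    by (simp_all add: measurable_cong_sets[OF sets_pair_measure_cong[OF refl sets_distr] refl])
  from this[THEN PX.borel_measurable_lebesgue_integral] show ?thesis
    unfolding cond_var_coord_def by measurable
qed

lemma L_fit_coord_eq:
  "L_fit j w \<bullet> e = L_fold n (fold_block (n div K) j) PX G (case_prod A (fst z)) fb (\<lambda>i. fst (snd z i)) \<bullet> e"
  if "z = (train j w, fold_data j w)"
  using that unfolding L_fold_def fit_eq by (simp cong: sum.cong)

lemma L_fold_coord_measurable:
  "(\<lambda>z. L_fold n (fold_block (n div K) j) PX G (case_prod A (fst z)) fb (\<lambda>i. fst (snd z i)) \<bullet> e)
    \<in> borel_measurable (Ptrain \<Otimes>\<^sub>M PiM (fold_block (n div K) j) (\<lambda>_. P))"
proof -
  let ?D = "Ptrain \<Otimes>\<^sub>M PiM (fold_block (n div K) j) (\<lambda>_. P)"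
  have mean_m: "(\<lambda>u. \<integral>x. G x (case_prod A u x) \<partial>PX) \<in> borel_measurable Ptrain"
    using PX.borel_measurable_lebesgue_integral[of "\<lambda>u x. G x (case_prod A u x)"]
    by (simp add: measurable_cong_sets[OF sets_pair_measure_cong[OF refl sets_distr] refl])
  have G_A_m: "(\<lambda>z. G (fst (snd z i)) (case_prod A (fst z) (fst (snd z i)))) \<in> borel_measurable ?D"
    if i: "i \<in> fold_block (n div K) j" for i
  proof -
    have "(\<lambda>z. (fst z, fst (snd z i))) \<in> measurable ?D (Ptrain \<Otimes>\<^sub>M SX)"
      using i by measurable
    from measurable_comp[OF this G_A_measurable] show ?thesis by (simp add: comp_def)
  qed
  have G_fb_m: "(\<lambda>z. G (fst (snd z i)) (fb (fst (snd z i)))) \<in> borel_measurable ?D"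
    if i: "i \<in> fold_block (n div K) j" for i
    using i by measurable
  show ?thesis unfolding L_fold_def using G_A_m G_fb_m
    by (intro borel_measurable_inner borel_measurable_scaleR borel_measurable_sum
        borel_measurable_diff measurable_const measurable_compose[OF measurable_fst mean_m]) auto
qed

lemma L_fit_coord_measurable:
  assumes j: "j < K"
  shows "(\<lambda>w. L_fit j w \<bullet> e) \<in> borel_measurable M"
  using measurable_comp[OF measurable_Pair[OF train_measurable[OF j] fold_data_measurable[OF j]]
      L_fold_coord_measurable]
  by (simp add: comp_def L_fit_coord_eq)

lemma nn_integral_L_fold_pair_le:
  assumes j: "j < K" and e: "e \<in> Basis"
  shows "(\<integral>\<^sup>+z. ennreal \<bar>L_fold n (fold_block (n div K) j) PX G (case_prod A (fst z)) fb (\<lambda>i. fst (snd z i)) \<bullet> e\<bar>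
      \<partial>(Ptrain \<Otimes>\<^sub>M PiM (fold_block (n div K) j) (\<lambda>_. P)))
    \<le> (\<integral>\<^sup>+u. ennreal (sqrt (train_var e u / K)) \<partial>Ptrain)"
proof -
  define h where "h = (\<lambda>u x. (G x (case_prod A u x) - G x (fb x)) \<bullet> e)"
  have h_m: "(\<lambda>(u, x). h u x) \<in> borel_measurable (Ptrain \<Otimes>\<^sub>M SX)" unfolding h_def by measurable
  have fold_finite: "finite (fold_block (n div K) j)" by (simp add: fold_block_def)
  have "AE u in Ptrain. integrable PX (\<lambda>x. (h u x)\<^sup>2) \<and>
      (\<forall>xs\<in>space (PiM (fold_block (n div K) j) (\<lambda>_. P)).
        L_fold n (fold_block (n div K) j) PX G (case_prod A u) fb (\<lambda>i. fst (xs i)) \<bullet> e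
        = (1 / sqrt n) * (\<Sum>i\<in>fold_block (n div K) j. h u (fst (xs i)) - (\<integral>x. h u x \<partial>PX)))"
    using AE_train_regular
    by eventually_elim (use e integrable_G_fb in \<open>simp add: h_def inner_L_fold\<close>)
  then have "(\<integral>\<^sup>+z. ennreal \<bar>L_fold n (fold_block (n div K) j) PX G (case_prod A (fst z)) fb (\<lambda>i. fst (snd z i)) \<bullet> e\<bar>
      \<partial>(Ptrain \<Otimes>\<^sub>M PiM (fold_block (n div K) j) (\<lambda>_. P)))
    \<le> (\<integral>\<^sup>+u. ennreal ((1 / sqrt n) * sqrt (card (fold_block (n div K) j)
        * ((\<integral>x. (h u x)\<^sup>2 \<partial>PX) - (\<integral>x. h u x \<partial>PX)\<^sup>2))) \<partial>Ptrain)"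
    by (intro nn_integral_abs_pair_centered_sum_le[OF Ptrain.prob_space_axioms prob_space_P
        fst_measurable fold_finite _ h_m L_fold_coord_measurable]) auto
  also have "\<dots> = (\<integral>\<^sup>+u. ennreal (sqrt (train_var e u / K)) \<partial>Ptrain)"
  proof (intro nn_integral_cong arg_cong[where f = ennreal])
    fix u
    have "n div K > 0" using fold_size n_pos by (metis gr0I mult_is_0)
    moreover have "real n = real (n div K) * real K" by (metis fold_size of_nat_mult)
    ultimately have "(1 / sqrt n) * sqrt ((n div K) * train_var e u) = sqrt (train_var e u / K)"
      by (simp add: real_sqrt_divide[symmetric] real_sqrt_mult[symmetric])
    then show "(1 / sqrt n) * sqrt (card (fold_block (n div K) j)
        * ((\<integral>x. (h u x)\<^sup>2 \<partial>PX) - (\<integral>x. h u x \<partial>PX)\<^sup>2)) = sqrt (train_var e u / K)"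
      by (simp add: fold_block_def cond_var_coord_def h_def)
  qed
  finally show ?thesis .
qed

lemma nn_integral_abs_L_fit_coord_le:
  assumes j: "j < K" and e: "e \<in> Basis"
  shows "(\<integral>\<^sup>+w. ennreal \<bar>L_fit j w \<bullet> e\<bar> \<partial>M) \<le> (\<integral>\<^sup>+u. ennreal (sqrt (train_var e u / K)) \<partial>Ptrain)"
proof -
  let ?F = "\<lambda>z. L_fold n (fold_block (n div K) j) PX G (case_prod A (fst z)) fb (\<lambda>i. fst (snd z i)) \<bullet> e"
  have "(\<integral>\<^sup>+w. ennreal \<bar>L_fit j w \<bullet> e\<bar> \<partial>M)
      = (\<integral>\<^sup>+z. ennreal \<bar>?F z\<bar> \<partial>(Ptrain \<Otimes>\<^sub>M PiM (fold_block (n div K) j) (\<lambda>_. P)))"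
    using nn_integral_distr[OF measurable_Pair[OF train_measurable[OF j] fold_data_measurable[OF j]],
        of "\<lambda>z. ennreal \<bar>?F z\<bar>"] L_fold_coord_measurable
    by (simp add: distr_train_fold[OF j] L_fit_coord_eq)
  then show ?thesis using nn_integral_L_fold_pair_le[OF j e] by simp
qed

lemma AE_cond_var_fit_nonneg: "AE w in M. \<forall>e\<in>Basis. 0 \<le> cond_var_coord PX G (fit 0 w) fb e"
proof -
  have "AE u in distr M Ptrain (train 0). \<forall>e\<in>Basis. 0 \<le> train_var e u"
    unfolding distr_train[OF K_pos] by (rule AE_train_var_nonneg)
  from AE_distrD[OF train_measurable[OF K_pos] this] show ?thesis by (simp add: fit_eq)
qed

lemma nn_integral_sqrt_train_var:
  assumes e: "e \<in> Basis"
    and int: "integrable M (\<lambda>w. sqrt (K * cond_var_coord PX G (fit 0 w) fb e))"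
  shows "(\<integral>\<^sup>+u. ennreal (sqrt (K * train_var e u)) \<partial>Ptrain)
    = ennreal (\<integral>w. sqrt (K * cond_var_coord PX G (fit 0 w) fb e) \<partial>M)"
proof -
  have "(\<integral>\<^sup>+u. ennreal (sqrt (K * train_var e u)) \<partial>Ptrain)
      = (\<integral>\<^sup>+w. ennreal (sqrt (K * cond_var_coord PX G (fit 0 w) fb e)) \<partial>M)"
    using nn_integral_distr[OF train_measurable[OF K_pos], of "\<lambda>u. ennreal (sqrt (K * train_var e u))"]
      train_var_measurable[of e]
    by (simp add: distr_train[OF K_pos] fit_eq)
  also have "\<dots> = ennreal (\<integral>w. sqrt (K * cond_var_coord PX G (fit 0 w) fb e) \<partial>M)"
    using AE_cond_var_fit_nonneg e by (intro nn_integral_eq_integral int) auto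
  finally show ?thesis .
qed

lemma nn_integral_sum_L_fit_le:
  assumes int: "\<And>e. e \<in> Basis \<Longrightarrow> integrable M (\<lambda>w. sqrt (K * cond_var_coord PX G (fit 0 w) fb e))"
  shows "(\<integral>\<^sup>+w. ennreal (\<Sum>j<K. \<Sum>e\<in>Basis. \<bar>L_fit j w \<bullet> e\<bar>) \<partial>M)
    \<le> ennreal (\<Sum>e\<in>Basis. \<integral>w. sqrt (K * cond_var_coord PX G (fit 0 w) fb e) \<partial>M)"
proof -
  have int_nonneg: "0 \<le> (\<integral>w. sqrt (K * cond_var_coord PX G (fit 0 w) fb e) \<partial>M)" if "e \<in> Basis" for e
    using AE_cond_var_fit_nonneg that by (intro integral_nonneg_AE) auto
  have term_m: "(\<lambda>w. ennreal \<bar>L_fit j w \<bullet> e\<bar>) \<in> borel_measurable M" if "j < K" for j e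
    using L_fit_coord_measurable[OF that, of e] by measurable
  have "(\<integral>\<^sup>+w. ennreal (\<Sum>j<K. \<Sum>e\<in>Basis. \<bar>L_fit j w \<bullet> e\<bar>) \<partial>M)
      = (\<integral>\<^sup>+w. (\<Sum>j<K. \<Sum>e\<in>Basis. ennreal \<bar>L_fit j w \<bullet> e\<bar>) \<partial>M)"
    by (intro nn_integral_cong) (simp add: sum_nonneg)
  also have "\<dots> = (\<Sum>j<K. \<Sum>e\<in>Basis. \<integral>\<^sup>+w. ennreal \<bar>L_fit j w \<bullet> e\<bar> \<partial>M)"
    using term_m
    by (subst nn_integral_sum) (auto intro!: sum.cong nn_integral_sum borel_measurable_sum simp del: sum_ennreal)
  also have "\<dots> \<le> (\<Sum>j<K. \<Sum>e\<in>Basis. \<integral>\<^sup>+u. ennreal (sqrt (train_var e u / K)) \<partial>Ptrain)"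
    using nn_integral_abs_L_fit_coord_le by (intro sum_mono) auto
  also have "\<dots> = (\<Sum>e\<in>Basis. of_nat K * \<integral>\<^sup>+u. ennreal (sqrt (train_var e u / K)) \<partial>Ptrain)"
    by (subst sum.swap) simp
  also have "\<dots> = (\<Sum>e\<in>Basis. \<integral>\<^sup>+u. ennreal (sqrt (K * train_var e u)) \<partial>Ptrain)"
  proof (intro sum.cong refl)
    fix e :: 'd
    have "ennreal (real K) * ennreal (sqrt (train_var e u / K)) = ennreal (sqrt (K * train_var e u))"
      for u by (simp add: ennreal_mult'[symmetric] mult_sqrt_divide_self)
    moreover have "of_nat K * (\<integral>\<^sup>+u. ennreal (sqrt (train_var e u / K)) \<partial>Ptrain)
        = (\<integral>\<^sup>+u. ennreal (real K) * ennreal (sqrt (train_var e u / K)) \<partial>Ptrain)"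
      using nn_integral_cmult[of "\<lambda>u. ennreal (sqrt (train_var e u / K))" Ptrain "ennreal (real K)"]
        train_var_measurable[of e]
      by (simp add: ennreal_of_nat_eq_real_of_nat)
    ultimately show "of_nat K * (\<integral>\<^sup>+u. ennreal (sqrt (train_var e u / K)) \<partial>Ptrain)
        = (\<integral>\<^sup>+u. ennreal (sqrt (K * train_var e u)) \<partial>Ptrain)"
      by simp
  qed
  also have "\<dots> = ennreal (\<Sum>e\<in>Basis. \<integral>w. sqrt (K * cond_var_coord PX G (fit 0 w) fb e) \<partial>M)"
    using int int_nonneg by (simp add: nn_integral_sqrt_train_var sum_ennreal)
  finally show ?thesis .
qed

lemma prob_norm_sum_L_fit_gt_le:
  assumes int: "\<And>e. e \<in> Basis \<Longrightarrow> integrable M (\<lambda>w. sqrt (K * cond_var_coord PX G (fit 0 w) fb e))"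
    and eps: "0 < \<epsilon>"
  shows "measure M {w \<in> space M. \<epsilon> < norm (\<Sum>j<K. L_fit j w)}
    \<le> (\<Sum>e\<in>Basis. \<integral>w. sqrt (K * cond_var_coord PX G (fit 0 w) fb e) \<partial>M) / \<epsilon>"
proof -
  define U where "U = (\<lambda>w. \<Sum>j<K. \<Sum>e\<in>Basis. \<bar>L_fit j w \<bullet> e\<bar>)"
  have U_m: "U \<in> borel_measurable M"
    unfolding U_def using L_fit_coord_measurable by (intro borel_measurable_sum borel_measurable_abs) auto
  have norm_le_U: "norm (\<Sum>j<K. L_fit j w) \<le> U w" for w
    unfolding U_def by (rule order_trans[OF norm_sum sum_mono[OF norm_le_l1]])
  have "measure M {w \<in> space M. \<epsilon> < norm (\<Sum>j<K. L_fit j w)} \<le> measure M {w \<in> space M. \<epsilon> < U w}"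
    using U_m norm_le_U by (intro M.finite_measure_mono) (auto intro: less_le_trans)
  also have "\<dots> \<le> (\<Sum>e\<in>Basis. \<integral>w. sqrt (K * cond_var_coord PX G (fit 0 w) fb e) \<partial>M) / \<epsilon>"
    using nn_integral_sum_L_fit_le[OF int] AE_cond_var_fit_nonneg
    by (intro M.prob_less_le_nn_integral U_m eps sum_nonneg integral_nonneg_AE)
       (auto simp: U_def sum_nonneg)
  finally show ?thesis .
qed

end

theorem lemma4:
  fixes l :: "'d::euclidean_space \<Rightarrow> 'x \<Rightarrow> 'y::euclidean_space \<Rightarrow> real"
    and \<theta> :: 'd
    and SX :: "'x measure"
    and P :: "('x \<times> 'y) measure"
    and M :: "nat \<Rightarrow> 'w measure"
    and N K :: "nat \<Rightarrow> nat"
    and Z :: "nat \<Rightarrow> nat \<Rightarrow> 'w \<Rightarrow> 'x \<times> 'y"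
    and R :: "nat \<Rightarrow> 'r measure"
    and xi :: "nat \<Rightarrow> nat \<Rightarrow> 'w \<Rightarrow> 'r"
    and A :: "nat \<Rightarrow> (nat \<Rightarrow> 'x \<times> 'y) \<Rightarrow> 'r \<Rightarrow> 'x \<Rightarrow> 'y"
  defines "PX \<equiv> distr P SX fst"
    and "G \<equiv> grad l \<theta>"
    and "f \<equiv> (\<lambda>m. fitted (A m) (N m) (N m div K m) (Z m) (xi m))"
  assumes P_prob: "prob_space P"
    and P_sets: "sets P = sets (SX \<Otimes>\<^sub>M (borel :: 'y measure))"
    and l_diff: "\<And>t x y. (\<lambda>s. l s x y) differentiable (at t)"
    and G_meas: "(\<lambda>(x, y). G x y) \<in> borel_measurable (SX \<Otimes>\<^sub>M (borel :: 'y measure))"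
    and M_prob: "\<And>m. prob_space (M m)"
    and K_pos: "\<And>m. 0 < K m"
    and K_dvd: "\<And>m. K m dvd N m"
    and N_lim: "filterlim N at_top sequentially"
    and Z_meas: "\<And>m i. i < N m \<Longrightarrow> Z m i \<in> measurable (M m) P"
    and Z_distr: "\<And>m i. i < N m \<Longrightarrow> distr (M m) P (Z m i) = P"
    and Z_indep: "\<And>m. prob_space.indep_vars (M m) (\<lambda>_. P) (Z m) {..<N m}"
    and xi_meas: "\<And>m j. j < K m \<Longrightarrow> xi m j \<in> measurable (M m) (R m)"
    and xi_distr: "\<And>m j. j < K m \<Longrightarrow> distr (M m) (R m) (xi m j) = R m"
    and xi_indep: "\<And>m. prob_space.indep_vars (M m) (\<lambda>_. R m) (xi m) {..<K m}"
    and data_xi_indep: "\<And>m B C. B \<in> sets (PiM {..<N m} (\<lambda>_. P)) \<Longrightarrow>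
          C \<in> sets (PiM {..<K m} (\<lambda>_. R m)) \<Longrightarrow>
          measure (M m) {w \<in> space (M m). (\<lambda>i\<in>{..<N m}. Z m i w) \<in> B \<and> (\<lambda>j\<in>{..<K m}. xi m j w) \<in> C}
          = measure (M m) {w \<in> space (M m). (\<lambda>i\<in>{..<N m}. Z m i w) \<in> B}
            * measure (M m) {w \<in> space (M m). (\<lambda>j\<in>{..<K m}. xi m j w) \<in> C}"
    and A_meas: "\<And>m. (\<lambda>((d, r), x). A m d r x) \<in> borel_measurable
          ((PiM {..< N m - N m div K m} (\<lambda>_. P) \<Otimes>\<^sub>M R m) \<Otimes>\<^sub>M SX)"
    and fbar_int: "\<And>m x. x \<in> space SX \<Longrightarrow> integrable (M m) (\<lambda>w. f m 0 w x)"
    and G_f_L2: "\<And>m. integrable (M m \<Otimes>\<^sub>M PX) (\<lambda>(w, x). (norm (G x (f m 0 w x)))\<^sup>2)"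
    and G_fbar_L2: "\<And>m. integrable PX (\<lambda>x. (norm (G x (fbar (M m) (f m 0) x)))\<^sup>2)"
    and stab_int: "\<And>m e. e \<in> Basis \<Longrightarrow> integrable (M m)
          (\<lambda>w. sqrt (real (K m) * cond_var_coord PX G (f m 0 w) (fbar (M m) (f m 0)) e))"
    and stab: "\<And>e. e \<in> Basis \<Longrightarrow>
          (\<lambda>m. \<integral>w. sqrt (real (K m) * cond_var_coord PX G (f m 0 w) (fbar (M m) (f m 0)) e) \<partial>M m)
            \<longlonglongrightarrow> 0"
  shows "\<forall>\<epsilon>>0. (\<lambda>m. measure (M m) {w \<in> space (M m).
            norm (\<Sum>j<K m. L_fold (N m) (fold_block (N m div K m) j) PX G (f m j w)
                               (fbar (M m) (f m 0)) (\<lambda>i. fst (Z m i w))) > \<epsilon>}) \<longlonglongrightarrow> 0"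
proof (intro allI impI)
  \<comment> \<open>\<open>P_prob\<close> follows from \<open>Z_distr\<close>.\<close>
  fix \<epsilon> :: real assume eps: "0 < \<epsilon>"
  let ?bound = "\<lambda>m. (\<Sum>e\<in>Basis. \<integral>w. sqrt (real (K m) * cond_var_coord PX G (f m 0 w) (fbar (M m) (f m 0)) e)
      \<partial>M m) / \<epsilon>"
  have "eventually (\<lambda>m. 1 \<le> N m) sequentially"
    using N_lim by (simp add: filterlim_at_top)
  then have bound: "eventually (\<lambda>m. measure (M m) {w \<in> space (M m).
      norm (\<Sum>j<K m. L_fold (N m) (fold_block (N m div K m) j) PX G (f m j w) (fbar (M m) (f m 0))
        (\<lambda>i. fst (Z m i w))) > \<epsilon>} \<le> ?bound m) sequentially"
  proof eventually_elim
    case (elim m)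
    then have "0 < N m" by simp
    note unfold_defs = f_def PX_def
    have "cross_fitting SX P G (M m) (N m) (K m) (Z m) (R m) (xi m) (A m)"
      by (rule cross_fitting.intro[OF P_sets G_meas M_prob \<open>0 < N m\<close> K_pos K_dvd Z_meas[where m = m]
          Z_distr[where m = m] Z_indep xi_meas[where m = m] xi_distr[where m = m] xi_indep data_xi_indep[where m = m] A_meas
          G_f_L2[where m = m, unfolded unfold_defs] G_fbar_L2[where m = m, unfolded unfold_defs]])
    then show ?case
      unfolding unfold_defs by (rule cross_fitting.prob_norm_sum_L_fit_gt_le[OF _ stab_int[unfolded unfold_defs] eps])
  qed
  have lim: "?bound \<longlonglongrightarrow> 0"
    using stab by (intro tendsto_divide_zero tendsto_null_sum) auto
  show "(\<lambda>m. measure (M m) {w \<in> space (M m).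
      norm (\<Sum>j<K m. L_fold (N m) (fold_block (N m div K m) j) PX G (f m j w) (fbar (M m) (f m 0))
        (\<lambda>i. fst (Z m i w))) > \<epsilon>}) \<longlonglongrightarrow> 0"
    by (rule tendsto_sandwich[OF _ bound tendsto_const lim]) simp
qed

end
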